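(* Let $H,K$ be complex Hilbert spaces, fix $\lambda\in(0,1)$, and let $\Phi:\mathcal{B}(H)\to\mathcal{B}(K)$ be a bijective map satisfying $$\Delta_\lambda(\Phi(A)\Phi(B))=\Phi(\Delta_\lambda(AB))\quad\text{for all }A,B\in\mathcal{B}(H).\qquad(\ast)$$ Then $\Phi(0)=0$, and there exists a bijective function $h:\mathbb{C}\to\mathbb{C}$ such that: (i) $\Phi(\alpha I)=h(\alpha)I$ for all $\alpha\in\mathbb{C}$; (ii) $h(\alpha\beta)=h(\alpha)h(\beta)$ for all $\alpha,\beta\in\mathbb{C}$; (iii) $h(1)=1$ and $h(-\alpha)=-h(\alpha)$ for all $\alpha\in\mathbb{C}$.
   Context: For $T\in\mathcal{B}(H)$, $|T|=(T^*T)^{1/2}$ and $T=V|T|$ is the polar decomposition, where $V$ is the partial isometry with $\mathcal{N}(V)=\mathcal{N}(T)$ and $\mathcal{N}(V^* )=\mathcal{N}(T^* )$. For $\lambda\in[0,1]$, the $\lambda$-Aluthge transform of $T$ is $\Delta_\lambda(T)=|T|^\lambda V|T|^{1-\lambda}$, with powers defined by continuous functional calculus. No linearity or continuity of $\Phi$ is assumed. *)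

theory Defs
  imports "HOL-Analysis.Analysis"
begin

class complex_vector = real_vector +
  fixes scaleC :: "complex \<Rightarrow> 'a \<Rightarrow> 'a"
  assumes scaleC_add_right: "scaleC a (x + y) = scaleC a x + scaleC a y"
    and scaleC_add_left: "scaleC (a + b) x = scaleC a x + scaleC b x"
    and scaleC_scaleC: "scaleC a (scaleC b x) = scaleC (a * b) x"
    and scaleC_one: "scaleC 1 x = x"
    and scaleC_of_real: "scaleC (complex_of_real r) x = scaleR r x"

class complex_inner = complex_vector + real_normed_vector +
  fixes cinner :: "'a \<Rightarrow> 'a \<Rightarrow> complex"
  assumes cinner_commute: "cinner x y = cnj (cinner y x)"
    and cinner_add_right: "cinner x (y + z) = cinner x y + cinner x z"
    and cinner_scaleC_right: "cinner x (scaleC a y) = a * cinner x y"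
    and cinner_self_real: "Im (cinner x x) = 0"
    and cinner_self_nonneg: "0 \<le> Re (cinner x x)"
    and cinner_self_zero: "cinner x x = 0 \<longleftrightarrow> x = 0"
    and norm_eq_sqrt_cinner: "norm x = sqrt (Re (cinner x x))"

class chilbert_space = complex_inner + complete_space

definition bounded_clinear :: "('a::complex_inner \<Rightarrow> 'b::complex_inner) \<Rightarrow> bool" where
  "bounded_clinear f \<longleftrightarrow>
     (\<forall>x y. f (x + y) = f x + f y) \<and> (\<forall>c x. f (scaleC c x) = scaleC c (f x)) \<and>
     (\<exists>K. \<forall>x. norm (f x) \<le> norm x * K)"

definition bops :: "('a::complex_inner \<Rightarrow> 'a) set" where
  "bops = {T. bounded_clinear T}"

definition adj :: "('a::complex_inner \<Rightarrow> 'a) \<Rightarrow> ('a \<Rightarrow> 'a)" where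
  "adj T = (THE S. \<forall>x y. cinner (T x) y = cinner x (S y))"

definition ker :: "('a::complex_inner \<Rightarrow> 'a) \<Rightarrow> 'a set" where
  "ker T = {x. T x = 0}"

definition positive_op :: "('a::complex_inner \<Rightarrow> 'a) \<Rightarrow> bool" where
  "positive_op P \<longleftrightarrow> bounded_clinear P \<and> (\<forall>x. Im (cinner x (P x)) = 0 \<and> 0 \<le> Re (cinner x (P x)))"

definition op_poly :: "real list \<Rightarrow> ('a::complex_inner \<Rightarrow> 'a) \<Rightarrow> ('a \<Rightarrow> 'a)" where
  "op_poly cs P = (\<lambda>x. \<Sum>i<length cs. scaleC (complex_of_real (cs ! i)) ((P ^^ i) x))"

definition rpoly :: "real list \<Rightarrow> real \<Rightarrow> real" where
  "rpoly cs t = (\<Sum>i<length cs. cs ! i * t ^ i)"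

text \<open>For a positive operator P (spectrum contained in [0, norm P]) and a continuous real
  function f, f(P) is the norm limit of p_n(P) for any sequence of real polynomials p_n
  converging uniformly to f on [0, norm P].\<close>
definition fcalc :: "(real \<Rightarrow> real) \<Rightarrow> ('a::complex_inner \<Rightarrow> 'a) \<Rightarrow> ('a \<Rightarrow> 'a)" where
  "fcalc f P = (THE Q. bounded_clinear Q \<and>
     (\<forall>ps :: nat \<Rightarrow> real list.
        (\<forall>e>0. eventually (\<lambda>n. \<forall>t\<in>{0..onorm P}. \<bar>rpoly (ps n) t - f t\<bar> < e) sequentially) \<longrightarrow>
        ((\<lambda>n. onorm (\<lambda>x. op_poly (ps n) P x - Q x)) \<longlonglongrightarrow> 0)))"

definition absop :: "('a::complex_inner \<Rightarrow> 'a) \<Rightarrow> ('a \<Rightarrow> 'a)" where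
  "absop T = fcalc sqrt (adj T \<circ> T)"

definition oppow :: "('a::complex_inner \<Rightarrow> 'a) \<Rightarrow> real \<Rightarrow> ('a \<Rightarrow> 'a)" where
  "oppow P r = fcalc (\<lambda>t. t powr r) P"

definition partial_isometry :: "('a::complex_inner \<Rightarrow> 'a) \<Rightarrow> bool" where
  "partial_isometry V \<longleftrightarrow> bounded_clinear V \<and> V \<circ> adj V \<circ> V = V"

definition polar_V :: "('a::complex_inner \<Rightarrow> 'a) \<Rightarrow> ('a \<Rightarrow> 'a)" where
  "polar_V T = (THE V. partial_isometry V \<and> T = V \<circ> absop T \<and>
                   ker V = ker T \<and> ker (adj V) = ker (adj T))"

definition aluthge :: "real \<Rightarrow> ('a::complex_inner \<Rightarrow> 'a) \<Rightarrow> ('a \<Rightarrow> 'a)" where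
  "aluthge l T = oppow (absop T) l \<circ> polar_V T \<circ> oppow (absop T) (1 - l)"

end

theory Submission
  imports Defs
begin

text \<open>Scalars are fixed by the Aluthge transform, and the transform of the rank-one operator
  x \<mapsto> \<langle>b, x\<rangle> a is \<langle>b, a\<rangle> times the orthogonal projection onto the span of b.
  Call T Aluthge-commuting if \<Delta>(TR) = \<Delta>(RT) for every rank-one R = u \<otimes> v. For such T these
  formulas give \<langle>v, Tu\<rangle> P_v = \<langle>T*v, u\<rangle> P_{T*v}; taking u = T*v shows that every vector is an
  eigenvector of T*, so T is scalar. Since a scalar commutes with everything, (\<ast>) makes \<Phi>(\<alpha>I)
  Aluthge-commuting, hence \<Phi>(\<alpha>I) = h(\<alpha>)I; the same argument, using injectivity of \<Phi>, shows
  that only scalars are mapped to scalars, so h is surjective. Multiplicativity of h is (\<ast>) for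
  two scalars, and h(1) = 1, h(-1) = -1 follow from multiplicativity and injectivity.\<close>

section \<open>Complex inner product spaces\<close>

lemma scaleC_zero_left [simp]: "scaleC 0 (x::'a::complex_vector) = 0"
  using scaleC_of_real[of 0 x] by simp

lemma scaleC_zero_right [simp]: "scaleC a (0::'a::complex_vector) = 0"
  using scaleC_add_right[of a "0::'a" 0] by simp

lemma scaleC_minus_left: "scaleC (- a) (x::'a::complex_vector) = - scaleC a x"
  using scaleC_add_left[of "-a" a x] by (simp add: eq_neg_iff_add_eq_0)

lemma scaleC_minus_right: "scaleC a (- x::'a::complex_vector) = - scaleC a x"
  using scaleC_add_right[of a "-x" x] by (simp add: eq_neg_iff_add_eq_0)

lemma scaleC_diff_right: "scaleC a (x - y::'a::complex_vector) = scaleC a x - scaleC a y"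
  using scaleC_add_right[of a x "-y"] by (simp add: scaleC_minus_right)

lemma scaleC_diff_left: "scaleC (a - b) (x::'a::complex_vector) = scaleC a x - scaleC b x"
  using scaleC_add_left[of a "-b" x] by (simp add: scaleC_minus_left)

lemma scaleC_sum_left: "scaleC (sum f A) (x::'a::complex_vector) = (\<Sum>i\<in>A. scaleC (f i) x)"
  by (induction A rule: infinite_finite_induct) (auto simp: scaleC_add_left)

lemma scaleC_eq_0_iff: "scaleC a (x::'a::complex_vector) = 0 \<longleftrightarrow> a = 0 \<or> x = 0"
proof
  assume ax: "scaleC a x = 0"
  show "a = 0 \<or> x = 0"
  proof (cases "a = 0")
    case False
    then have "x = scaleC (inverse a) (scaleC a x)" by (simp add: scaleC_scaleC scaleC_one)
    then show ?thesis using ax by simp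
  qed simp
qed auto

lemma scaleC_left_imp_eq: "scaleC a (x::'a::complex_vector) = scaleC b x \<Longrightarrow> x \<noteq> 0 \<Longrightarrow> a = b"
  using scaleC_eq_0_iff[of "a - b" x] by (auto simp: scaleC_diff_left)

lemma cinner_add_left: "cinner (x + y) (z::'a::complex_inner) = cinner x z + cinner y z"
  by (metis cinner_add_right cinner_commute complex_cnj_add)

lemma cinner_scaleC_left: "cinner (scaleC a x) (y::'a::complex_inner) = cnj a * cinner x y"
  by (metis cinner_commute cinner_scaleC_right complex_cnj_mult)

lemma cinner_zero_left [simp]: "cinner 0 (x::'a::complex_inner) = 0"
  using cinner_add_left[of 0 0 x] by simp

lemma cinner_zero_right [simp]: "cinner (x::'a::complex_inner) 0 = 0"
  using cinner_add_right[of x 0 0] by simp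

lemma cinner_diff_left: "cinner (x - y) (z::'a::complex_inner) = cinner x z - cinner y z"
  using cinner_add_left[of "x - y" y z] by simp

lemma cinner_diff_right: "cinner x (y - z::'a::complex_inner) = cinner x y - cinner x z"
  using cinner_add_right[of x "y - z" z] by simp

lemma power2_norm_eq_cinner: "(norm (x::'a::complex_inner))\<^sup>2 = Re (cinner x x)"
  using norm_eq_sqrt_cinner[of x] cinner_self_nonneg[of x] by simp

lemma cinner_self: "cinner x (x::'a::complex_inner) = complex_of_real ((norm x)\<^sup>2)"
  using power2_norm_eq_cinner[of x] cinner_self_real[of x] by (simp add: complex_eq_iff)

lemma norm_scaleC: "norm (scaleC a (x::'a::complex_inner)) = cmod a * norm x"
proof -
  have "cinner (scaleC a x) (scaleC a x) = (a * cnj a) * cinner x x"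
    by (simp add: cinner_scaleC_left cinner_scaleC_right mult_ac)
  also have "\<dots> = complex_of_real ((cmod a * norm x)\<^sup>2)"
    by (simp add: cinner_self complex_norm_square[symmetric] power_mult_distrib)
  finally have "(norm (scaleC a x))\<^sup>2 = (cmod a * norm x)\<^sup>2"
    by (simp add: power2_norm_eq_cinner)
  then show ?thesis by (simp add: power2_eq_iff_nonneg)
qed

lemma pythagoras:
  assumes "cinner x (y::'a::complex_inner) = 0"
  shows "(norm (x + y))\<^sup>2 = (norm x)\<^sup>2 + (norm y)\<^sup>2"
proof -
  have "cinner y x = 0" using assms by (metis cinner_commute complex_cnj_zero)
  then have "cinner (x + y) (x + y) = cinner x x + cinner y y"
    by (simp add: cinner_add_left cinner_add_right assms)
  from arg_cong[OF this, of Re] show ?thesis by (simp add: power2_norm_eq_cinner)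
qed

lemma parallelogram_law:
  "(norm (p + q::'a::complex_inner))\<^sup>2 + (norm (p - q))\<^sup>2 = 2 * (norm p)\<^sup>2 + 2 * (norm q)\<^sup>2"
proof -
  have "cinner (p + q) (p + q) + cinner (p - q) (p - q) = 2 * cinner p p + 2 * cinner q q"
    by (simp add: cinner_add_left cinner_add_right cinner_diff_left cinner_diff_right)
  from arg_cong[OF this, of Re] show ?thesis by (simp add: power2_norm_eq_cinner)
qed

lemma cinner_eqI_right: "(\<And>z. cinner z x = cinner z y) \<Longrightarrow> x = (y::'a::complex_inner)"
  using cinner_self_zero[of "x - y"] by (simp add: cinner_diff_right)

lemma cinner_eqI_left: "(\<And>z. cinner x z = cinner y z) \<Longrightarrow> x = (y::'a::complex_inner)"
  by (rule cinner_eqI_right) (metis cinner_commute)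

text \<open>Orthogonal projection onto the span of v; division by zero makes it 0 when v = 0.\<close>
definition proj :: "'a::complex_inner \<Rightarrow> 'a \<Rightarrow> 'a" where
  "proj v x = scaleC (cinner v x / complex_of_real ((norm v)\<^sup>2)) v"

lemma cinner_proj_orth: "cinner v (x - proj v x) = 0"
  by (cases "v = 0") (simp_all add: proj_def cinner_diff_right cinner_scaleC_right cinner_self)

lemma cinner_proj: "cinner v (proj v x) = cinner v x"
  using cinner_proj_orth[of v x] by (simp add: cinner_diff_right)

lemma proj_orth: "cinner (proj v x) (y - proj v y) = 0"
proof -
  have "proj v x = scaleC (cinner v x / complex_of_real ((norm v)\<^sup>2)) v" by (rule proj_def)
  then show ?thesis by (simp only: cinner_scaleC_left cinner_proj_orth mult_zero_right)
qed

lemma proj_self [simp]: "proj v v = v"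
  by (cases "v = 0") (simp_all add: proj_def cinner_self scaleC_one)

lemma proj_proj: "proj v (proj v x) = proj v x"
  by (simp only: proj_def[of v "proj v x"] cinner_proj) (simp only: proj_def)

lemma proj_scaleC: "proj v (scaleC c x) = scaleC c (proj v x)"
  by (simp add: proj_def cinner_scaleC_right scaleC_scaleC mult_ac)

lemma norm_proj: "norm (proj v x) = cmod (cinner v x) / norm v"
  by (cases "v = 0") (simp_all add: proj_def norm_scaleC norm_divide norm_mult power2_eq_square)

lemma power2_norm_proj_decomp: "(norm x)\<^sup>2 = (norm (proj v x))\<^sup>2 + (norm (x - proj v x))\<^sup>2"
  using pythagoras[OF proj_orth[of v x x]] by simp

lemma norm_proj_le: "norm (proj v x) \<le> norm x"
  using power2_norm_proj_decomp[of x v] by - (rule power2_le_imp_le, simp_all)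

lemma cauchy_schwarz: "cmod (cinner v x) \<le> norm v * norm (x::'a::complex_inner)"
  by (cases "v = 0") (use norm_proj_le[of v x] in \<open>simp_all add: norm_proj divide_le_eq mult.commute\<close>)

section \<open>Riesz representation\<close>

lemma convex_near_minimizers_close:
  fixes x a b :: "'a::complex_inner"
  assumes "convex C" "a \<in> C" "b \<in> C" and D: "\<And>m. m \<in> C \<Longrightarrow> D \<le> (norm (x - m))\<^sup>2"
  shows "(norm (a - b))\<^sup>2 \<le> 2 * (norm (x - a))\<^sup>2 + 2 * (norm (x - b))\<^sup>2 - 4 * D"
proof -
  let ?mid = "(1/2) *\<^sub>R a + (1/2) *\<^sub>R b"
  have "?mid \<in> C" using convexD[OF assms(1-3)] by simp
  then have "4 * D \<le> 4 * (norm (x - ?mid))\<^sup>2" using D by simp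
  also have "\<dots> = (norm ((x - a) + (x - b)))\<^sup>2"
  proof -
    have "(x - a) + (x - b) = 2 *\<^sub>R (x - ?mid)" by (simp add: algebra_simps scaleR_2)
    then show ?thesis by (simp add: power_mult_distrib)
  qed
  finally show ?thesis
    using parallelogram_law[of "x - a" "x - b"] by (simp add: norm_minus_commute)
qed

lemma closest_point_exists:
  fixes x :: "'a::chilbert_space"
  assumes "closed C" "convex C" "C \<noteq> {}"
  obtains n where "n \<in> C" "\<And>m. m \<in> C \<Longrightarrow> norm (x - n) \<le> norm (x - m)"
proof -
  define D where "D = (INF m\<in>C. (norm (x - m))\<^sup>2)"
  have D: "D \<le> (norm (x - m))\<^sup>2" if "m \<in> C" for m
    unfolding D_def by (rule cINF_lower[OF _ that]) (auto intro: bdd_belowI2[of _ 0])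
  have "\<exists>n\<in>C. (norm (x - n))\<^sup>2 < D + 1 / real (Suc k)" for k
    using cInf_lessD[of "(\<lambda>m. (norm (x - m))\<^sup>2) ` C" "D + 1 / real (Suc k)"] assms(3)
    unfolding D_def by simp
  then obtain ns where ns: "\<And>k. ns k \<in> C" "\<And>k. (norm (x - ns k))\<^sup>2 < D + 1 / real (Suc k)"
    by metis
  have "Cauchy ns"
  proof (rule CauchyI)
    fix e :: real assume "0 < e"
    then obtain M where M: "1 / real (Suc M) < e\<^sup>2 / 4" using nat_approx_posE[of "e\<^sup>2 / 4"] by auto
    have "norm (ns i - ns j) < e" if "M \<le> i" "M \<le> j" for i j
    proof -
      have "1 / real (Suc i) \<le> 1 / real (Suc M)" "1 / real (Suc j) \<le> 1 / real (Suc M)"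
        using that by (simp_all add: frac_le)
      then have "(norm (ns i - ns j))\<^sup>2 < e\<^sup>2"
        using convex_near_minimizers_close[OF assms(2) ns(1)[of i] ns(1)[of j] D] ns(2)[of i] ns(2)[of j] M
        by linarith
      then show ?thesis using \<open>0 < e\<close> by (simp add: power_less_imp_less_base)
    qed
    then show "\<exists>M. \<forall>i\<ge>M. \<forall>j\<ge>M. norm (ns i - ns j) < e" by blast
  qed
  then obtain n where lim: "ns \<longlonglongrightarrow> n" using Cauchy_convergent convergent_def by blast
  have "(norm (x - n))\<^sup>2 \<le> D"
  proof (rule tendsto_le[OF trivial_limit_sequentially])
    show "(\<lambda>k. (norm (x - ns k))\<^sup>2) \<longlonglongrightarrow> (norm (x - n))\<^sup>2" by (intro tendsto_intros lim)
    show "(\<lambda>k. D + 1 / real (Suc k)) \<longlonglongrightarrow> D"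
      using tendsto_add[OF tendsto_const LIMSEQ_inverse_real_of_nat] by (simp add: inverse_eq_divide)
  qed (use ns(2) in \<open>simp add: less_imp_le\<close>)
  then have "norm (x - n) \<le> norm (x - m)" if "m \<in> C" for m
    using D[OF that] by (metis norm_ge_zero order.trans power2_le_imp_le)
  with closed_sequentially[OF assms(1) ns(1) lim] show thesis by (rule that)
qed

lemma closest_point_orthogonal:
  fixes x :: "'a::complex_inner"
  assumes closest: "\<And>m. m \<in> N \<Longrightarrow> norm (x - n) \<le> norm (x - m)"
    and line: "\<And>c. n + scaleC c v \<in> N"
  shows "cinner v (x - n) = 0"
proof (cases "v = 0")
  case False
  obtain c where "proj v (x - n) = scaleC c v" by (auto simp: proj_def)
  then have "norm (x - n) \<le> norm ((x - n) - proj v (x - n))"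
    using closest[OF line[of c]] by (simp add: algebra_simps)
  then have "(norm (x - n))\<^sup>2 \<le> (norm ((x - n) - proj v (x - n)))\<^sup>2"
    by (simp add: power_mono)
  then have "norm (proj v (x - n)) = 0"
    using power2_norm_proj_decomp[of "x - n" v] by simp
  then show ?thesis using False by (simp add: norm_proj)
qed simp

lemma kernel_closed_subspace:
  fixes f :: "'a::complex_inner \<Rightarrow> complex"
  assumes add: "\<And>x y. f (x + y) = f x + f y"
    and hom: "\<And>c x. f (scaleC c x) = c * f x"
    and bnd: "\<And>x. cmod (f x) \<le> K * norm x"
  shows "closed {x. f x = 0}" and "subspace {x. f x = 0}"
proof -
  have scaleR: "f (r *\<^sub>R x) = r *\<^sub>R f x" for r x
    using hom[of "complex_of_real r" x] by (simp add: scaleC_of_real scaleR_conv_of_real)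
  have "bounded_linear f"
    by (rule bounded_linear_intro[where K=K]) (simp_all add: add scaleR bnd mult.commute)
  then show "closed {x. f x = 0}"
    by (intro closed_Collect_eq linear_continuous_on continuous_on_const)
  show "subspace {x. f x = 0}"
    unfolding subspace_def using scaleR[of 0 0] by (simp add: add scaleR)
qed

theorem riesz_representation:
  fixes f :: "'a::chilbert_space \<Rightarrow> complex"
  assumes add: "\<And>x y. f (x + y) = f x + f y"
    and hom: "\<And>c x. f (scaleC c x) = c * f x"
    and bnd: "\<And>x. cmod (f x) \<le> K * norm x"
  obtains w where "\<And>x. f x = cinner w x"
proof (cases "\<forall>x. f x = 0")
  case True
  then show thesis by (intro that[of 0]) simp
next
  case False
  then obtain x1 where x1: "f x1 \<noteq> 0" by blast
  define x0 where "x0 = scaleC (1 / f x1) x1"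
  have fx0: "f x0 = 1" using x1 by (simp add: x0_def hom)
  have fdiff: "f (x - y) = f x - f y" for x y
    using add[of "x - y" y] by simp
  define N where "N = {n. f n = 0}"
  obtain n where n: "n \<in> N" "\<And>m. m \<in> N \<Longrightarrow> norm (x0 - n) \<le> norm (x0 - m)"
    using closest_point_exists[of N x0] kernel_closed_subspace[OF add hom bnd] subspace_imp_convex subspace_0
    unfolding N_def by blast
  define z where "z = x0 - n"
  have fz: "f z = 1" using n(1) by (simp add: z_def fdiff fx0 N_def)
  have orth: "cinner v z = 0" if "f v = 0" for v
    using closest_point_orthogonal[of N x0 n v] n that by (simp add: z_def N_def add hom)
  show thesis
  proof (rule that)
    fix x
    have "f (x - scaleC (f x) z) = 0" by (simp add: fdiff hom fz)
    from orth[OF this] have "cinner x z = cnj (f x) * cinner z z"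
      by (simp add: cinner_diff_left cinner_scaleC_left)
    then have "cinner z x = f x * complex_of_real ((norm z)\<^sup>2)"
      by (subst cinner_commute) (simp add: cinner_self)
    moreover have "z \<noteq> 0" using fz hom[of 0 0] by auto
    ultimately show "f x = cinner (scaleC (1 / complex_of_real ((norm z)\<^sup>2)) z) x"
      by (simp add: cinner_scaleC_left)
  qed
qed

section \<open>Bounded operators\<close>

lemma clinear_add: "bounded_clinear f \<Longrightarrow> f (x + y) = f x + f y"
  by (simp add: bounded_clinear_def)

lemma clinear_scaleC: "bounded_clinear f \<Longrightarrow> f (scaleC c x) = scaleC c (f x)"
  by (simp add: bounded_clinear_def)

lemma clinear_zero: "bounded_clinear f \<Longrightarrow> f 0 = 0"
  using clinear_scaleC[of f 0 0] by simp

lemma clinear_diff: "bounded_clinear f \<Longrightarrow> f (x - y) = f x - f y"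
  using clinear_add[of f "x - y" y] by simp

lemma bounded_clinearI:
  assumes "\<And>x y. f (x + y) = f x + f y" "\<And>c x. f (scaleC c x) = scaleC c (f x)"
    and "\<And>x. norm (f x) \<le> norm x * K"
  shows "bounded_clinear f"
  using assms unfolding bounded_clinear_def by blast

lemma bounded_clinear_nonneg_bound:
  assumes "bounded_clinear f"
  obtains K where "K \<ge> 0" "\<And>x. norm (f x) \<le> norm x * K"
proof -
  obtain K where K: "\<And>x. norm (f x) \<le> norm x * K" using assms by (auto simp: bounded_clinear_def)
  have "norm (f x) \<le> norm x * max K 0" for x
    using K[of x] mult_left_mono[of K "max K 0" "norm x"] by simp
  then show thesis by (intro that[of "max K 0"]) simp_all
qed

lemma bounded_clinear_imp_bounded_linear:
  assumes "bounded_clinear f"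
  shows "bounded_linear f"
proof -
  obtain K where "\<And>x. norm (f x) \<le> norm x * K" using assms by (auto simp: bounded_clinear_def)
  then show ?thesis
    by (intro bounded_linear_intro[where K=K])
      (simp_all add: clinear_add[OF assms] clinear_scaleC[OF assms, of "complex_of_real _", unfolded scaleC_of_real])
qed

lemma bounded_clinear_id: "bounded_clinear (\<lambda>x. x)"
  by (rule bounded_clinearI[where K=1]) auto

lemma bounded_clinear_zero: "bounded_clinear (\<lambda>x. 0)"
  by (rule bounded_clinearI[where K=0]) auto

lemma bounded_clinear_scaleC: "bounded_clinear (scaleC c)"
  by (rule bounded_clinearI[where K="cmod c"]) (auto simp: scaleC_add_right scaleC_scaleC mult.commute norm_scaleC)

lemma bounded_clinear_compose:
  assumes f: "bounded_clinear f" and g: "bounded_clinear g"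
  shows "bounded_clinear (f \<circ> g)"
proof -
  obtain K1 where K1: "K1 \<ge> 0" "\<And>x. norm (f x) \<le> norm x * K1" using bounded_clinear_nonneg_bound[OF f] by blast
  obtain K2 where K2: "\<And>x. norm (g x) \<le> norm x * K2" using bounded_clinear_nonneg_bound[OF g] by blast
  show ?thesis
  proof (rule bounded_clinearI[where K="K2 * K1"])
    show "norm ((f \<circ> g) x) \<le> norm x * (K2 * K1)" for x
      using K1(2)[of "g x"] mult_right_mono[OF K2[of x] K1(1)] by (simp add: mult.assoc)
  qed (simp_all add: clinear_add[OF f] clinear_add[OF g] clinear_scaleC[OF f] clinear_scaleC[OF g])
qed

lemma bounded_clinear_add:
  assumes f: "bounded_clinear f" and g: "bounded_clinear g"
  shows "bounded_clinear (\<lambda>x. f x + g x)"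
proof -
  obtain K1 where K1: "\<And>x. norm (f x) \<le> norm x * K1" using bounded_clinear_nonneg_bound[OF f] by blast
  obtain K2 where K2: "\<And>x. norm (g x) \<le> norm x * K2" using bounded_clinear_nonneg_bound[OF g] by blast
  show ?thesis
  proof (rule bounded_clinearI[where K="K1 + K2"])
    show "norm (f x + g x) \<le> norm x * (K1 + K2)" for x
      using norm_triangle_ineq[of "f x" "g x"] K1[of x] K2[of x] by (simp add: distrib_left)
  qed (simp_all add: clinear_add[OF f] clinear_add[OF g] clinear_scaleC[OF f] clinear_scaleC[OF g]
        scaleC_add_right add_ac)
qed

lemma bounded_clinear_scaleC_left: "bounded_clinear f \<Longrightarrow> bounded_clinear (\<lambda>x. scaleC c (f x))"
  using bounded_clinear_compose[OF bounded_clinear_scaleC[of c]] by (simp add: comp_def)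

lemma bounded_clinear_diff:
  "bounded_clinear f \<Longrightarrow> bounded_clinear g \<Longrightarrow> bounded_clinear (\<lambda>x. f x - g x)"
  using bounded_clinear_add[of f "\<lambda>x. scaleC (-1) (g x)"] bounded_clinear_scaleC_left[of g "-1"]
  by (simp add: scaleC_minus_left scaleC_one)

lemma bounded_clinear_sum:
  "(\<And>i. i \<in> A \<Longrightarrow> bounded_clinear (f i)) \<Longrightarrow> bounded_clinear (\<lambda>x. \<Sum>i\<in>A. f i x)"
  by (induction A rule: infinite_finite_induct) (auto intro: bounded_clinear_zero bounded_clinear_add)

lemma bounded_clinear_funpow:
  fixes P :: "'a::complex_inner \<Rightarrow> 'a"
  shows "bounded_clinear P \<Longrightarrow> bounded_clinear (P ^^ n)"
proof (induction n)
  case 0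
  have "P ^^ 0 = (\<lambda>x. x)" by (rule ext) simp
  then show ?case by (simp only: bounded_clinear_id)
qed (simp add: bounded_clinear_compose)

lemma bounded_clinear_op_poly: "bounded_clinear P \<Longrightarrow> bounded_clinear (op_poly cs P)"
  unfolding op_poly_def
  by (intro bounded_clinear_sum bounded_clinear_compose[OF bounded_clinear_scaleC bounded_clinear_funpow,
        unfolded comp_def])

lemma bounded_clinear_proj: "bounded_clinear (proj v)"
proof (rule bounded_clinearI[where K=1])
  show "proj v (x + y) = proj v x + proj v y" for x y
    by (simp add: proj_def cinner_add_right add_divide_distrib scaleC_add_left)
qed (simp_all add: norm_proj_le proj_scaleC)

lemma adj_eqI:
  assumes "\<And>x y. cinner (T x) y = cinner x (S y)"
  shows "adj T = S"
  unfolding adj_def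
proof (rule the_equality)
  fix S' assume "\<forall>x y. cinner (T x) y = cinner x (S' y)"
  then show "S' = S" using assms by (intro ext cinner_eqI_right) metis
qed (use assms in blast)

lemma cinner_adj:
  fixes S :: "'a::chilbert_space \<Rightarrow> 'a"
  assumes "bounded_clinear S"
  shows "cinner (S x) y = cinner x (adj S y)"
proof -
  obtain K where K: "K \<ge> 0" "\<And>x. norm (S x) \<le> norm x * K"
    using bounded_clinear_nonneg_bound[OF assms] by blast
  have "\<exists>w. \<forall>x. cinner y (S x) = cinner w x" for y
  proof (rule riesz_representation[where K="norm y * K"])
    show "cmod (cinner y (S x)) \<le> norm y * K * norm x" for x
      using cauchy_schwarz[of y "S x"] mult_left_mono[OF K(2)[of x], of "norm y"] by (simp add: mult_ac)
  qed (auto simp: clinear_add[OF assms] clinear_scaleC[OF assms] cinner_add_right cinner_scaleC_right)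
  then obtain S' where "\<And>y x. cinner y (S x) = cinner (S' y) x" by metis
  then have "adj S = S'" by (intro adj_eqI) (metis cinner_commute)
  with \<open>cinner y (S x) = cinner (S' y) x\<close> show ?thesis by (metis cinner_commute)
qed

section \<open>Functional calculus of operators with two-point spectrum\<close>

lemma uniform_limit_rpoly_iff:
  "uniform_limit S (\<lambda>n. rpoly (ps n)) f sequentially \<longleftrightarrow>
    (\<forall>e>0. \<forall>\<^sub>F n in sequentially. \<forall>t\<in>S. \<bar>rpoly (ps n) t - f t\<bar> < e)"
  by (simp add: uniform_limit_iff dist_real_def)

lemma rpoly_map_upt: "rpoly (map c [0..<Suc N]) t = (\<Sum>i\<le>N. c i * t ^ i)"
  unfolding rpoly_def by (simp add: lessThan_Suc_atMost[symmetric] del: upt_Suc)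

lemma uniform_rpoly_approximation:
  fixes f :: "real \<Rightarrow> real"
  assumes "continuous_on {a..b} f"
  obtains ps where "uniform_limit {a..b} (\<lambda>n. rpoly (ps n)) f sequentially"
proof -
  have "\<exists>cs. \<forall>t\<in>{a..b}. \<bar>rpoly cs t - f t\<bar> < 1 / real (Suc n)" for n
  proof -
    obtain g where g: "real_polynomial_function g" "\<And>t. t \<in> {a..b} \<Longrightarrow> \<bar>f t - g t\<bar> < 1 / real (Suc n)"
      using Stone_Weierstrass_real_polynomial_function[OF compact_Icc assms, of "1 / real (Suc n)"] by auto
    obtain c N where "g = (\<lambda>x. \<Sum>i\<le>N. c i * x ^ i)"
      using real_polynomial_function_imp_sum[OF g(1)] by blast
    then show ?thesis
      using g(2) by (intro exI[of _ "map c [0..<Suc N]"]) (simp add: rpoly_map_upt abs_minus_commute del: upt_Suc)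
  qed
  then obtain ps where ps: "\<And>n t. t \<in> {a..b} \<Longrightarrow> \<bar>rpoly (ps n) t - f t\<bar> < 1 / real (Suc n)"
    by metis
  have "uniform_limit {a..b} (\<lambda>n. rpoly (ps n)) f sequentially"
    unfolding uniform_limit_rpoly_iff
  proof (intro allI impI)
    fix e :: real assume "e > 0"
    then obtain N where N: "1 / real (Suc N) < e" using nat_approx_posE by blast
    have "\<bar>rpoly (ps n) t - f t\<bar> < e" if "N \<le> n" "t \<in> {a..b}" for n t
    proof -
      have "1 / real (Suc n) \<le> 1 / real (Suc N)" using that(1) by (simp add: frac_le)
      then show ?thesis using ps[OF that(2), of n] N by linarith
    qed
    then show "\<forall>\<^sub>F n in sequentially. \<forall>t\<in>{a..b}. \<bar>rpoly (ps n) t - f t\<bar> < e"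
      by (auto intro: eventually_sequentiallyI[of N])
  qed
  then show thesis by (rule that)
qed

lemma onorm_limits_unique:
  assumes "\<And>n. bounded_linear (G n)" "bounded_linear Q" "bounded_linear Q'"
    and "(\<lambda>n. onorm (\<lambda>x. G n x - Q x)) \<longlonglongrightarrow> 0" "(\<lambda>n. onorm (\<lambda>x. G n x - Q' x)) \<longlonglongrightarrow> 0"
  shows "Q = Q'"
proof
  fix x
  have "norm (Q x - Q' x) \<le> (onorm (\<lambda>x. G n x - Q x) + onorm (\<lambda>x. G n x - Q' x)) * norm x" for n
  proof -
    have "norm (Q x - Q' x) \<le> norm (G n x - Q x) + norm (G n x - Q' x)"
      by (metis norm_minus_commute norm_triangle_ineq4 diff_diff_eq2 diff_add_cancel add_diff_eq)
    also have "\<dots> \<le> onorm (\<lambda>x. G n x - Q x) * norm x + onorm (\<lambda>x. G n x - Q' x) * norm x"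
      using assms(1-3) by (intro add_mono onorm bounded_linear_sub)
    finally show ?thesis by (simp add: algebra_simps)
  qed
  moreover have "(\<lambda>n. (onorm (\<lambda>x. G n x - Q x) + onorm (\<lambda>x. G n x - Q' x)) * norm x) \<longlonglongrightarrow> 0"
    using tendsto_mult_left_zero[OF tendsto_add_zero[OF assms(4,5)]] .
  ultimately have "norm (Q x - Q' x) \<le> 0"
    by (intro tendsto_le[OF trivial_limit_sequentially _ tendsto_const]) auto
  then show "Q x = Q' x" by simp
qed

lemma fcalc_eqI:
  fixes P Q :: "'a::complex_inner \<Rightarrow> 'a"
  assumes P: "bounded_clinear P" and Q: "bounded_clinear Q" and f: "continuous_on {0..onorm P} f"
    and conv: "\<And>ps. uniform_limit {0..onorm P} (\<lambda>n. rpoly (ps n)) f sequentially \<Longrightarrow>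
      (\<lambda>n. onorm (\<lambda>x. op_poly (ps n) P x - Q x)) \<longlonglongrightarrow> 0"
  shows "fcalc f P = Q"
  unfolding fcalc_def uniform_limit_rpoly_iff[symmetric]
proof (rule the_equality)
  fix Q' assume Q': "bounded_clinear Q' \<and> (\<forall>ps. uniform_limit {0..onorm P} (\<lambda>n. rpoly (ps n)) f sequentially \<longrightarrow>
    (\<lambda>n. onorm (\<lambda>x. op_poly (ps n) P x - Q' x)) \<longlonglongrightarrow> 0)"
  obtain ps where ps: "uniform_limit {0..onorm P} (\<lambda>n. rpoly (ps n)) f sequentially"
    using uniform_rpoly_approximation[OF f] .
  show "Q' = Q"
    using ps Q' conv[OF ps] P Q
    by (intro onorm_limits_unique[of "\<lambda>n. op_poly (ps n) P"])
      (auto intro: bounded_clinear_imp_bounded_linear bounded_clinear_op_poly)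
qed (use Q conv in blast)

text \<open>For an orthogonal projection E, the operator a(I - E) + bE with spectrum {a, b}. Scalars and the
  moduli of rank-one operators have this form, so this is all of the functional calculus that is needed.\<close>
definition spectral_op :: "('a::complex_vector \<Rightarrow> 'a) \<Rightarrow> real \<Rightarrow> real \<Rightarrow> 'a \<Rightarrow> 'a" where
  "spectral_op E a b x = scaleC (complex_of_real a) (x - E x) + scaleC (complex_of_real b) (E x)"

lemma spectral_op_id: "spectral_op (\<lambda>x. x) a b = scaleC (complex_of_real b)"
  by (rule ext) (simp add: spectral_op_def)

lemma spectral_op_diff:
  "spectral_op E a b x - spectral_op E a' b' x = spectral_op E (a - a') (b - b') x"
  by (simp add: spectral_op_def scaleC_diff_left)

locale orth_projection =
  fixes E :: "'a::complex_inner \<Rightarrow> 'a"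
  assumes bounded: "bounded_clinear E"
    and idem [simp]: "E (E x) = E x"
    and orth: "cinner (E x) (y - E y) = 0"
begin

lemma norm_le: "norm (E x) \<le> norm x"
  and norm_compl_le: "norm (x - E x) \<le> norm x"
  using pythagoras[OF orth[of x x]] by (simp_all add: power2_le_imp_le)

lemma bounded_clinear_spectral_op: "bounded_clinear (spectral_op E a b)"
  unfolding spectral_op_def[abs_def]
  by (intro bounded_clinear_add bounded_clinear_scaleC_left bounded_clinear_diff bounded_clinear_id bounded)

lemma spectral_op_mult:
  "spectral_op E a b (spectral_op E a' b' x) = spectral_op E (a * a') (b * b') x"
  by (simp add: spectral_op_def clinear_add[OF bounded] clinear_scaleC[OF bounded] clinear_diff[OF bounded]
      scaleC_scaleC)

lemma funpow_spectral_op: "spectral_op E a b ^^ n = spectral_op E (a ^ n) (b ^ n)"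
proof (induction n)
  case 0
  show ?case by (rule ext) (simp add: spectral_op_def scaleC_one)
qed (simp add: comp_def spectral_op_mult mult_ac)

lemma op_poly_spectral_op: "op_poly cs (spectral_op E a b) = spectral_op E (rpoly cs a) (rpoly cs b)"
  by (rule ext)
    (simp add: op_poly_def rpoly_def funpow_spectral_op spectral_op_def scaleC_add_right scaleC_scaleC
      sum.distrib scaleC_sum_left[symmetric] of_real_sum)

lemma onorm_spectral_op_le: "onorm (spectral_op E a b) \<le> \<bar>a\<bar> + \<bar>b\<bar>"
proof (rule onorm_bound)
  fix x
  have "norm (spectral_op E a b x) \<le> \<bar>a\<bar> * norm (x - E x) + \<bar>b\<bar> * norm (E x)"
    using norm_triangle_ineq[of "scaleC (complex_of_real a) (x - E x)" "scaleC (complex_of_real b) (E x)"]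
    by (simp add: spectral_op_def norm_scaleC)
  also have "\<dots> \<le> (\<bar>a\<bar> + \<bar>b\<bar>) * norm x"
    using mult_left_mono[OF norm_compl_le, of "\<bar>a\<bar>" x] mult_left_mono[OF norm_le, of "\<bar>b\<bar>" x]
    by (simp add: algebra_simps)
  finally show "norm (spectral_op E a b x) \<le> (\<bar>a\<bar> + \<bar>b\<bar>) * norm x" .
qed simp

lemma onorm_spectral_op_0:
  assumes "E x0 \<noteq> 0" "0 \<le> c"
  shows "onorm (spectral_op E 0 c) = c"
proof (rule antisym)
  show "onorm (spectral_op E 0 c) \<le> c" using onorm_spectral_op_le[of 0 c] assms(2) by simp
  have "norm (spectral_op E 0 c (E x0)) / norm (E x0) \<le> onorm (spectral_op E 0 c)"
    by (intro le_onorm bounded_clinear_imp_bounded_linear bounded_clinear_spectral_op)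
  then show "c \<le> onorm (spectral_op E 0 c)"
    using assms by (simp add: spectral_op_def norm_scaleC)
qed

lemma fcalc_spectral_op:
  assumes "E x0 \<noteq> 0" "0 \<le> c" and f: "continuous_on {0..c} f"
  shows "fcalc f (spectral_op E 0 c) = spectral_op E (f 0) (f c)"
proof (rule fcalc_eqI[OF bounded_clinear_spectral_op bounded_clinear_spectral_op])
  show "continuous_on {0..onorm (spectral_op E 0 c)} f" using f onorm_spectral_op_0[OF assms(1,2)] by simp
  fix ps assume "uniform_limit {0..onorm (spectral_op E 0 c)} (\<lambda>n. rpoly (ps n)) f sequentially"
  then have lim: "uniform_limit {0..c} (\<lambda>n. rpoly (ps n)) f sequentially"
    using onorm_spectral_op_0[OF assms(1,2)] by simp
  have "(\<lambda>n. \<bar>rpoly (ps n) t - f t\<bar>) \<longlonglongrightarrow> 0" if "t \<in> {0..c}" for t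
    using tendsto_rabs[OF tendsto_diff[OF tendsto_uniform_limitI[OF lim that] tendsto_const[of "f t"]]] by simp
  then have bound: "(\<lambda>n. \<bar>rpoly (ps n) 0 - f 0\<bar> + \<bar>rpoly (ps n) c - f c\<bar>) \<longlonglongrightarrow> 0"
    using assms(2) by (intro tendsto_add_zero) auto
  show "(\<lambda>n. onorm (\<lambda>x. op_poly (ps n) (spectral_op E 0 c) x - spectral_op E (f 0) (f c) x)) \<longlonglongrightarrow> 0"
    unfolding op_poly_spectral_op spectral_op_diff
    by (intro tendsto_sandwich[OF _ _ tendsto_const bound] always_eventually allI
        onorm_spectral_op_le onorm_pos_le bounded_clinear_imp_bounded_linear bounded_clinear_spectral_op)
qed

end

lemma orth_projection_id: "orth_projection (\<lambda>x. x)"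
  by unfold_locales (simp_all add: bounded_clinear_id)

lemma orth_projection_proj: "orth_projection (proj v)"
  by unfold_locales (simp_all add: bounded_clinear_proj proj_proj proj_orth)

lemma spectral_op_0_left: "spectral_op E 0 c x = scaleC (complex_of_real c) (E x)"
  by (simp add: spectral_op_def)

section \<open>Aluthge transform of scalar operators\<close>

lemma fun_eq_trivial_space: "(\<And>x::'a::complex_vector. x = 0) \<Longrightarrow> (f :: 'b \<Rightarrow> 'a) = g"
  by (rule ext) metis

lemma continuous_on_powr_Icc: "0 < r \<Longrightarrow> continuous_on {0..m} (\<lambda>t::real. t powr r)"
  by (rule continuous_on_powr'[OF continuous_on_id continuous_on_const]) auto

lemma continuous_on_sqrt_Icc: "continuous_on {0..m} sqrt"
  by (rule continuous_on_real_sqrt[OF continuous_on_id])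

lemma fcalc_scaleC:
  assumes "0 \<le> c" "continuous_on {0..c} f"
  shows "fcalc f (scaleC (complex_of_real c) :: 'a::complex_inner \<Rightarrow> 'a) = scaleC (complex_of_real (f c))"
proof (cases "\<exists>x0::'a. x0 \<noteq> 0")
  case True
  then show ?thesis
    using orth_projection.fcalc_spectral_op[OF orth_projection_id _ assms] by (auto simp: spectral_op_id)
qed (intro fun_eq_trivial_space, blast)

lemma adj_scaleC: "adj (scaleC a :: 'a::complex_inner \<Rightarrow> 'a) = scaleC (cnj a)"
  by (rule adj_eqI) (simp add: cinner_scaleC_left cinner_scaleC_right)

lemma absop_scaleC: "absop (scaleC a :: 'a::complex_inner \<Rightarrow> 'a) = scaleC (complex_of_real (cmod a))"
proof -
  have "cnj a * a = complex_of_real ((cmod a)\<^sup>2)"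
    by (subst complex_norm_square) (rule mult.commute)
  then have "adj (scaleC a :: 'a \<Rightarrow> 'a) \<circ> scaleC a = scaleC (complex_of_real ((cmod a)\<^sup>2))"
    by (intro ext) (simp only: comp_apply adj_scaleC scaleC_scaleC)
  then show ?thesis
    unfolding absop_def using fcalc_scaleC[OF zero_le_power2 continuous_on_sqrt_Icc, of "cmod a"]
    by (simp only: real_sqrt_abs abs_norm_cancel)
qed

lemma oppow_scaleC:
  "0 < r \<Longrightarrow> 0 \<le> m \<Longrightarrow>
    oppow (scaleC (complex_of_real m) :: 'a::complex_inner \<Rightarrow> 'a) r = scaleC (complex_of_real (m powr r))"
  unfolding oppow_def by (rule fcalc_scaleC[OF _ continuous_on_powr_Icc])

lemma ker_scaleC: "ker (scaleC a :: 'a::complex_inner \<Rightarrow> 'a) = (if a = 0 then UNIV else {0})"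
  by (auto simp: ker_def scaleC_eq_0_iff)

text \<open>The polar factor is determined by its values on ker T and on the range of |T|; the hypothesis
  decomp says that these two subspaces together span the whole space.\<close>
lemma polar_V_eqI:
  assumes V: "partial_isometry V" "T = V \<circ> absop T" "ker V = ker T" "ker (adj V) = ker (adj T)"
    and decomp: "\<And>x. \<exists>k y. T k = 0 \<and> x = k + absop T y"
  shows "polar_V T = V"
  unfolding polar_V_def
proof (rule the_equality)
  have eq: "W x = T y" if "partial_isometry W" "T = W \<circ> absop T" "ker W = ker T" "T k = 0"
    "x = k + absop T y" for W x k y
  proof -
    have "W k = 0" using that(3,4) by (auto simp: ker_def)
    then show ?thesis
      using that(1,5) fun_cong[OF that(2), of y] by (simp add: partial_isometry_def clinear_add)
  qed
  fix W assume "partial_isometry W \<and> T = W \<circ> absop T \<and> ker W = ker T \<and> ker (adj W) = ker (adj T)"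
  then show "W = V" using eq[of W] eq[OF V(1-3)] decomp by (metis ext)
qed (use V in blast)

lemma polar_V_scaleC: "polar_V (scaleC a :: 'a::complex_inner \<Rightarrow> 'a) = scaleC (sgn a)"
proof (rule polar_V_eqI)
  have "sgn a * (cnj (sgn a) * sgn a) = sgn a"
    by (cases "a = 0") (simp_all add: complex_norm_square[symmetric] norm_sgn mult.assoc[symmetric])
  then show "partial_isometry (scaleC (sgn a) :: 'a \<Rightarrow> 'a)"
    unfolding partial_isometry_def by (auto simp: bounded_clinear_scaleC adj_scaleC scaleC_scaleC)
  show "scaleC a = scaleC (sgn a) \<circ> absop (scaleC a :: 'a \<Rightarrow> 'a)"
    by (rule ext) (simp add: absop_scaleC scaleC_scaleC sgn_eq)
  show "ker (scaleC (sgn a) :: 'a \<Rightarrow> 'a) = ker (scaleC a)"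
    and "ker (adj (scaleC (sgn a)) :: 'a \<Rightarrow> 'a) = ker (adj (scaleC a))"
    by (simp_all add: ker_scaleC adj_scaleC sgn_zero_iff)
  show "\<exists>k y. scaleC a k = 0 \<and> x = k + absop (scaleC a) y" for x :: 'a
  proof (cases "a = 0")
    case False
    then show ?thesis
      by (intro exI[of _ 0] exI[of _ "scaleC (complex_of_real (1 / cmod a)) x"])
        (simp add: absop_scaleC scaleC_scaleC scaleC_one)
  qed (intro exI[of _ x] exI[of _ 0], simp add: absop_scaleC)
qed

lemma aluthge_scaleC:
  assumes "0 < l" "l < 1"
  shows "aluthge l (scaleC a :: 'a::complex_inner \<Rightarrow> 'a) = scaleC a"
proof -
  have "complex_of_real (cmod a powr l) * sgn a * complex_of_real (cmod a powr (1 - l))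
      = sgn a * complex_of_real (cmod a powr l * cmod a powr (1 - l))"
    by (simp add: mult_ac)
  also have "\<dots> = sgn a * complex_of_real (cmod a)"
    by (cases "a = 0") (simp_all flip: powr_add)
  also have "\<dots> = a" by (simp add: sgn_eq)
  finally show ?thesis
    using assms unfolding aluthge_def absop_scaleC polar_V_scaleC
    by (simp add: oppow_scaleC comp_def scaleC_scaleC)
qed

section \<open>Aluthge transform of rank-one operators\<close>

definition rank1 :: "'a::complex_inner \<Rightarrow> 'a \<Rightarrow> 'a \<Rightarrow> 'a" where
  "rank1 a b x = scaleC (cinner b x) a"

lemma bounded_clinear_rank1: "bounded_clinear (rank1 a b)"
proof (rule bounded_clinearI[where K="norm b * norm a"])
  show "norm (rank1 a b x) \<le> norm x * (norm b * norm a)" for x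
    using mult_right_mono[OF cauchy_schwarz[of b x] norm_ge_zero[of a]]
    by (simp add: rank1_def norm_scaleC mult_ac)
qed (simp_all add: rank1_def cinner_add_right scaleC_add_left cinner_scaleC_right scaleC_scaleC)

lemma adj_rank1: "adj (rank1 a b) = rank1 b a"
  by (rule adj_eqI) (simp add: rank1_def cinner_scaleC_left cinner_scaleC_right mult.commute
      cinner_commute[of b])

lemma comp_rank1: "bounded_clinear A \<Longrightarrow> A \<circ> rank1 u v = rank1 (A u) v"
  by (rule ext) (simp add: rank1_def clinear_scaleC)

lemma rank1_comp:
  fixes A :: "'a::chilbert_space \<Rightarrow> 'a"
  shows "bounded_clinear A \<Longrightarrow> rank1 u v \<circ> A = rank1 u (adj A v)"
  by (rule ext) (simp add: rank1_def cinner_commute[of v] cinner_commute[of "adj A v"] flip: cinner_adj)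

lemma absop_rank1:
  assumes "b \<noteq> 0"
  shows "absop (rank1 a b) = spectral_op (proj b) 0 (norm a * norm b)"
proof -
  have "adj (rank1 a b) \<circ> rank1 a b = spectral_op (proj b) 0 ((norm a * norm b)\<^sup>2)"
    using assms
    by (intro ext) (simp add: adj_rank1 rank1_def cinner_scaleC_right cinner_self spectral_op_0_left
        proj_def scaleC_scaleC power_mult_distrib mult_ac)
  then show ?thesis
    using orth_projection.fcalc_spectral_op[OF orth_projection_proj, of b b] assms
    unfolding absop_def by (simp add: continuous_on_sqrt_Icc)
qed

lemma oppow_absop_rank1:
  assumes "b \<noteq> 0" "0 < r"
  shows "oppow (absop (rank1 a b)) r = spectral_op (proj b) 0 ((norm a * norm b) powr r)"
  using orth_projection.fcalc_spectral_op[OF orth_projection_proj, of b b] assms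
  unfolding oppow_def absop_rank1[OF assms(1)] by (simp add: continuous_on_powr_Icc)

lemma polar_V_rank1:
  assumes "a \<noteq> 0" "b \<noteq> 0"
  shows "polar_V (rank1 a b) = rank1 (scaleC (complex_of_real (1 / (norm a * norm b))) a) b"
    (is "_ = ?V")
proof (rule polar_V_eqI)
  let ?m = "complex_of_real (norm a * norm b)"
  have m: "?m \<noteq> 0" using assms by simp
  show "partial_isometry ?V"
    unfolding partial_isometry_def adj_rank1 using m
    by (auto intro!: ext bounded_clinear_rank1
        simp: rank1_def cinner_scaleC_left cinner_scaleC_right scaleC_scaleC cinner_self power2_eq_square)
  show "rank1 a b = ?V \<circ> absop (rank1 a b)"
    using m assms
    by (intro ext) (simp add: absop_rank1 rank1_def spectral_op_0_left cinner_scaleC_right cinner_proj scaleC_scaleC)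
  show "ker ?V = ker (rank1 a b)" and "ker (adj ?V) = ker (adj (rank1 a b))"
    using assms by (auto simp: ker_def adj_rank1 rank1_def scaleC_eq_0_iff cinner_scaleC_left)
  show "\<exists>k y. rank1 a b k = 0 \<and> x = k + absop (rank1 a b) y" for x
    using m
    by (intro exI[of _ "x - proj b x"] exI[of _ "scaleC (1 / ?m) (proj b x)"])
      (simp add: rank1_def cinner_proj_orth absop_rank1[OF assms(2)] spectral_op_0_left proj_scaleC proj_proj
        scaleC_scaleC scaleC_one)
qed

lemma aluthge_rank1:
  assumes "0 < l" "l < 1"
  shows "aluthge l (rank1 a b) = (\<lambda>x. scaleC (cinner b a) (proj b x))"
proof (cases "a = 0 \<or> b = 0")
  case True
  then have "rank1 a b = scaleC 0" by (auto simp: rank1_def)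
  moreover have "(\<lambda>x. scaleC (cinner b a) (proj b x)) = scaleC 0" using True by (auto simp: proj_def)
  ultimately show ?thesis using aluthge_scaleC[OF assms] by simp
next
  case False
  then have ab: "a \<noteq> 0" "b \<noteq> 0" by auto
  let ?m = "norm a * norm b"
  have "?m powr l * ?m powr (1 - l) / ?m = 1" using False by (simp flip: powr_add)
  then have "complex_of_real (?m powr l) * complex_of_real (?m powr (1 - l)) / complex_of_real ?m = 1"
    by (simp flip: of_real_mult of_real_divide)
  then have "aluthge l (rank1 a b) x = scaleC (cinner b x) (proj b a)" for x
    using ab assms unfolding aluthge_def polar_V_rank1[OF ab]
    by (simp add: oppow_absop_rank1 spectral_op_0_left rank1_def proj_scaleC cinner_scaleC_right
        cinner_proj scaleC_scaleC mult_ac)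
  then show ?thesis by (auto simp: proj_def scaleC_scaleC mult_ac)
qed

section \<open>Aluthge-commuting operators are scalar\<close>

lemma every_vector_eigen_imp_scalar:
  fixes L :: "'a::complex_vector \<Rightarrow> 'a"
  assumes add: "\<And>x y. L (x + y) = L x + L y"
    and hom: "\<And>c x. L (scaleC c x) = scaleC c (L x)"
    and eigen: "\<And>v. \<exists>c. L v = scaleC c v"
  obtains d where "\<And>v. L v = scaleC d v"
proof (cases "\<exists>v0::'a. v0 \<noteq> 0")
  case True
  then obtain v0 :: 'a where v0: "v0 \<noteq> 0" by blast
  obtain c0 where c0: "L v0 = scaleC c0 v0" using eigen by blast
  have "L v = scaleC c0 v" for v
  proof -
    obtain c where c: "L v = scaleC c v" using eigen by blast
    obtain c' where c': "L (v + v0) = scaleC c' (v + v0)" using eigen by blast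
    have diff: "scaleC (c' - c) v = scaleC (c0 - c') v0"
      using c' by (simp add: add c c0 scaleC_add_right scaleC_diff_left algebra_simps)
    show ?thesis
    proof (cases "c' = c")
      case True
      then have "c0 = c'" using diff v0 by (simp add: scaleC_eq_0_iff)
      then show ?thesis using c True by simp
    next
      case False
      then have "v = scaleC (inverse (c' - c) * (c0 - c')) v0"
        using arg_cong[OF diff, of "scaleC (inverse (c' - c))"] by (simp add: scaleC_scaleC scaleC_one)
      then show ?thesis by (simp add: hom c0 scaleC_scaleC mult.commute)
    qed
  qed
  then show thesis by (rule that)
next
  case False
  then have "L v = scaleC 0 v" for v by (metis hom scaleC_zero_left)
  then show thesis by (rule that)
qed

lemma adj_clinear:
  fixes S :: "'a::chilbert_space \<Rightarrow> 'a"
  assumes "bounded_clinear S"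
  shows "adj S (x + y) = adj S x + adj S y" and "adj S (scaleC c x) = scaleC c (adj S x)"
  by (rule cinner_eqI_right, simp add: cinner_adj[OF assms, symmetric] cinner_add_right cinner_scaleC_right)+

lemma scalar_if_aluthge_commutes_rank1:
  fixes S :: "'a::chilbert_space \<Rightarrow> 'a"
  assumes S: "bounded_clinear S" and l: "0 < l" "l < 1"
    and comm: "\<And>u v. aluthge l (S \<circ> rank1 u v) = aluthge l (rank1 u v \<circ> S)"
  obtains c where "S = scaleC c"
proof -
  have eigen: "\<exists>c. adj S v = scaleC c v" for v
  proof -
    define w where "w = adj S v"
    have "cinner v (S w) = cinner w w"
      using cinner_adj[OF S, of w v] by (metis cinner_commute w_def)
    then have "scaleC (cinner w w) (proj v w) = scaleC (cinner w w) w"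
      using fun_cong[OF comm[of w v], of w]
      unfolding comp_rank1[OF S] rank1_comp[OF S] aluthge_rank1[OF l] w_def[symmetric] by simp
    then have "scaleC (cinner w w) (proj v w - w) = 0" by (simp add: scaleC_diff_right)
    then have "w = 0 \<or> proj v w = w" by (simp add: scaleC_eq_0_iff cinner_self_zero)
    then show ?thesis unfolding w_def proj_def by (metis scaleC_zero_left)
  qed
  obtain d where d: "\<And>v. adj S v = scaleC d v"
    using every_vector_eigen_imp_scalar[OF adj_clinear[OF S] eigen] by blast
  have "S u = scaleC (cnj d) u" for u
    by (rule cinner_eqI_left) (simp add: cinner_adj[OF S] d cinner_scaleC_left cinner_scaleC_right)
  then show thesis by (intro that[of "cnj d"] ext)
qed

section \<open>Bijections compatible with the Aluthge transform of products\<close>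

lemma bops_scaleC [simp]: "scaleC c \<in> bops"
  by (simp add: bops_def bounded_clinear_scaleC)

lemma bops_rank1 [simp]: "rank1 u v \<in> bops"
  by (simp add: bops_def bounded_clinear_rank1)

lemma bops_aluthge_rank1: "0 < l \<Longrightarrow> l < 1 \<Longrightarrow> aluthge l (rank1 u v) \<in> bops"
  by (simp add: aluthge_rank1 bops_def bounded_clinear_scaleC_left bounded_clinear_proj)

lemma scaleC_comp_commute: "B \<in> bops \<Longrightarrow> scaleC c \<circ> B = B \<circ> scaleC c"
  by (rule ext) (simp add: bops_def clinear_scaleC)

lemma scaleC_zero_fun: "scaleC 0 = (\<lambda>x::'a::complex_vector. 0)"
  by (rule ext) simp

lemma scaleC_fun_eqD: "scaleC a = (scaleC b :: 'a::complex_vector \<Rightarrow> 'a) \<Longrightarrow> (x::'a) \<noteq> 0 \<Longrightarrow> a = b"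
  by (metis scaleC_left_imp_eq)

locale aluthge_product_preserving =
  fixes \<Phi> :: "('h::chilbert_space \<Rightarrow> 'h) \<Rightarrow> ('k::chilbert_space \<Rightarrow> 'k)" and l :: real
  assumes l: "0 < l" "l < 1"
    and bij: "bij_betw \<Phi> bops bops"
    and aluthge_prod: "\<And>A B. A \<in> bops \<Longrightarrow> B \<in> bops \<Longrightarrow> aluthge l (\<Phi> A \<circ> \<Phi> B) = \<Phi> (aluthge l (A \<circ> B))"
begin

lemma Phi_bops [simp]: "A \<in> bops \<Longrightarrow> \<Phi> A \<in> bops"
  using bij by (auto simp: bij_betw_def)

lemma Phi_preimage:
  assumes "T \<in> bops"
  obtains A where "A \<in> bops" "\<Phi> A = T"
  using assms bij by (metis bij_betw_imp_surj_on imageE)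

lemma Phi_inj: "A \<in> bops \<Longrightarrow> B \<in> bops \<Longrightarrow> \<Phi> A = \<Phi> B \<Longrightarrow> A = B"
  using bij by (auto simp: bij_betw_def inj_on_def)

lemma aluthge_Phi_commute:
  assumes "A \<in> bops" "B \<in> bops" "A \<circ> B = B \<circ> A"
  shows "aluthge l (\<Phi> A \<circ> \<Phi> B) = aluthge l (\<Phi> B \<circ> \<Phi> A)"
  using assms by (simp add: aluthge_prod)

lemma Phi_scaleC_0: "\<Phi> (scaleC 0) = scaleC 0"
proof -
  obtain A where A: "A \<in> bops" "\<Phi> A = scaleC 0" using Phi_preimage[OF bops_scaleC] .
  have "A \<circ> scaleC 0 = scaleC 0" "\<Phi> A \<circ> \<Phi> (scaleC 0) = scaleC 0"
    using A by (auto simp: bops_def clinear_zero)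
  then show ?thesis using aluthge_prod[OF A(1) bops_scaleC, of 0] by (simp add: aluthge_scaleC[OF l])
qed

lemma Phi_scaleC_scalar: "\<exists>c. \<Phi> (scaleC a) = scaleC c"
proof -
  have "bounded_clinear (\<Phi> (scaleC a))" using Phi_bops[OF bops_scaleC] by (simp add: bops_def)
  then show ?thesis
  proof (rule scalar_if_aluthge_commutes_rank1[OF _ l])
    fix u v :: 'k
    obtain B where B: "B \<in> bops" "\<Phi> B = rank1 u v" using Phi_preimage[OF bops_rank1] .
    show "aluthge l (\<Phi> (scaleC a) \<circ> rank1 u v) = aluthge l (rank1 u v \<circ> \<Phi> (scaleC a))"
      using aluthge_Phi_commute[OF bops_scaleC B(1) scaleC_comp_commute[OF B(1)]] B(2) by simp
  qed blast
qed

lemma scalar_if_Phi_scalar: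
  assumes A: "A \<in> bops" "\<Phi> A = scaleC c"
  shows "\<exists>a. A = scaleC a"
proof -
  have "bounded_clinear A" using A(1) by (simp add: bops_def)
  then show ?thesis
  proof (rule scalar_if_aluthge_commutes_rank1[OF _ l])
    fix u v :: 'h
    have "\<Phi> (aluthge l (A \<circ> rank1 u v)) = aluthge l (scaleC c \<circ> \<Phi> (rank1 u v))"
      using aluthge_prod[OF A(1) bops_rank1] A(2) by simp
    also have "\<dots> = aluthge l (\<Phi> (rank1 u v) \<circ> scaleC c)"
      by (simp add: scaleC_comp_commute)
    also have "\<dots> = \<Phi> (aluthge l (rank1 u v \<circ> A))"
      using aluthge_prod[OF bops_rank1 A(1)] A(2) by simp
    finally show "aluthge l (A \<circ> rank1 u v) = aluthge l (rank1 u v \<circ> A)"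
      using \<open>bounded_clinear A\<close>
      by (intro Phi_inj) (simp_all add: comp_rank1 rank1_comp bops_aluthge_rank1[OF l])
  qed blast
qed

definition scalar_map :: "complex \<Rightarrow> complex" where
  "scalar_map a = (SOME c. \<Phi> (scaleC a) = scaleC c)"

lemma Phi_scaleC: "\<Phi> (scaleC a) = scaleC (scalar_map a)"
  unfolding scalar_map_def using someI_ex[OF Phi_scaleC_scalar] .

context
  fixes y0 :: 'k
  assumes y0: "y0 \<noteq> 0"
begin

lemma domain_nontrivial: "\<exists>x0::'h. x0 \<noteq> 0"
proof (rule ccontr)
  assume "\<nexists>x0::'h. x0 \<noteq> 0"
  obtain A where A: "A \<in> bops" "\<Phi> A = scaleC 1" using Phi_preimage[OF bops_scaleC] .
  have "A = scaleC 0" using \<open>\<nexists>x0. x0 \<noteq> 0\<close> by (intro fun_eq_trivial_space) blast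
  then have "(scaleC 1 :: 'k \<Rightarrow> 'k) = scaleC 0" using A(2) Phi_scaleC_0 by simp
  then show False using scaleC_fun_eqD[OF _ y0] by force
qed

lemma scalar_map_mult: "scalar_map (a * b) = scalar_map a * scalar_map b"
proof -
  have "scaleC (scalar_map (a * b)) = \<Phi> (aluthge l (scaleC a \<circ> scaleC b))"
    by (simp add: Phi_scaleC[symmetric] aluthge_scaleC[OF l] comp_def scaleC_scaleC)
  also have "\<dots> = aluthge l (\<Phi> (scaleC a) \<circ> \<Phi> (scaleC b))"
    by (rule aluthge_prod[OF bops_scaleC bops_scaleC, symmetric])
  also have "\<dots> = scaleC (scalar_map a * scalar_map b)"
    by (simp add: Phi_scaleC aluthge_scaleC[OF l] comp_def scaleC_scaleC)
  finally show ?thesis using scaleC_fun_eqD[OF _ y0] by blast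
qed

lemma bij_scalar_map: "bij scalar_map"
proof (rule bijI)
  obtain x0 :: 'h where x0: "x0 \<noteq> 0" using domain_nontrivial by blast
  show "inj scalar_map"
  proof (rule injI)
    fix a b assume "scalar_map a = scalar_map b"
    then have "\<Phi> (scaleC a) = \<Phi> (scaleC b)" by (simp add: Phi_scaleC)
    then have "(scaleC a :: 'h \<Rightarrow> 'h) = scaleC b" by (rule Phi_inj[OF bops_scaleC bops_scaleC])
    then show "a = b" using scaleC_fun_eqD[OF _ x0] by blast
  qed
  have "c \<in> range scalar_map" for c
  proof -
    obtain A where A: "A \<in> bops" "\<Phi> A = scaleC c" using Phi_preimage[OF bops_scaleC] .
    then obtain a where "A = scaleC a" using scalar_if_Phi_scalar by blast
    then have "scaleC (scalar_map a) = (scaleC c :: 'k \<Rightarrow> 'k)" using A(2) by (simp add: Phi_scaleC)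
    then show ?thesis using scaleC_fun_eqD[OF _ y0] by blast
  qed
  then show "surj scalar_map" by blast
qed

end

end

lemma injective_multiplicative_fixes_units:
  fixes h :: "'a::{idom, ring_char_0} \<Rightarrow> 'a"
  assumes inj: "inj h" and mult: "\<And>a b. h (a * b) = h a * h b"
  shows "h 1 = 1" and "h (- a) = - h a"
proof -
  have "h 1 \<noteq> 0"
  proof
    assume "h 1 = 0"
    then have "h 0 = h 1" using mult[of 0 1] by simp
    then show False using injD[OF inj] by fastforce
  qed
  then show h1: "h 1 = 1" using mult[of 1 1] by simp
  have "(h (-1) - 1) * (h (-1) + 1) = 0"
    using mult[of "-1" "-1"] h1 by (simp add: algebra_simps)
  moreover have "h (-1) \<noteq> 1" using h1 injD[OF inj, of "-1" 1] one_neq_neg_one by fastforce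
  ultimately have "h (-1) = -1" by (simp add: eq_neg_iff_add_eq_0)
  then show "h (- a) = - h a" using mult[of "-1" a] by simp
qed

theorem proposition2p2:
  fixes \<Phi> :: "('h::chilbert_space \<Rightarrow> 'h) \<Rightarrow> ('k::chilbert_space \<Rightarrow> 'k)"
    and l :: real
  assumes "0 < l" and "l < 1"
    and "bij_betw \<Phi> bops bops"
    and "\<forall>A\<in>bops. \<forall>B\<in>bops. aluthge l (\<Phi> A \<circ> \<Phi> B) = \<Phi> (aluthge l (A \<circ> B))"
  shows "\<Phi> (\<lambda>x. 0) = (\<lambda>y. 0) \<and>
    (\<exists>h :: complex \<Rightarrow> complex. bij h \<and>
       (\<forall>\<alpha>. \<Phi> (\<lambda>x. scaleC \<alpha> x) = (\<lambda>y. scaleC (h \<alpha>) y)) \<and>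
       (\<forall>\<alpha> \<beta>. h (\<alpha> * \<beta>) = h \<alpha> * h \<beta>) \<and>
       h 1 = 1 \<and> (\<forall>\<alpha>. h (- \<alpha>) = - h \<alpha>))"
proof -
  interpret aluthge_product_preserving \<Phi> l
    using assms by unfold_locales auto
  have zero: "\<Phi> (\<lambda>x. 0) = (\<lambda>y. 0)"
    using Phi_scaleC_0 by (simp add: scaleC_zero_fun)
  show ?thesis
  proof (cases "\<exists>y0::'k. y0 \<noteq> 0")
    case True
    then obtain y0 :: 'k where y0: "y0 \<noteq> 0" by blast
    note mult = scalar_map_mult[OF y0]
    have "inj scalar_map" using bij_scalar_map[OF y0] by (rule bij_is_inj)
    note units = injective_multiplicative_fixes_units[OF this mult]
    show ?thesis
      using zero bij_scalar_map[OF y0] mult units Phi_scaleC by (intro conjI exI[of _ scalar_map]) auto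
  next
    case False
    then have "\<Phi> (scaleC a) = scaleC (id a)" for a by (intro fun_eq_trivial_space) blast
    with zero show ?thesis by (intro conjI exI[of _ id]) auto
  qed
qed

end
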